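(* Let $\sigma$ be any argumentation semantics whose extensions are maximal conflict-free sets (w.r.t. set inclusion). For every two argumentation frameworks $AF=(AR,Attacks)$, $AF'=(AR',Attacks')$ with $AF\preceq_N AF'$: if for all $E\in\sigma(AF)$ and all $E'\in\sigma(AF')$ we have $E\subseteq E'$, then for all $E\in\sigma(AF)$ and all $E'\in\sigma(AF')$ we have $E'\not\subseteq AR$ or $E'=E$.
   Context: An argumentation framework is a pair $(AR,Attacks)$ with $AR$ a finite set and $Attacks\subseteq AR\times AR$; $a$ attacks $b$ iff $(a,b)\in Attacks$. A set $S$ is conflict-free iff no element of $S$ attacks an element of $S$. An argumentation semantics $\sigma$ assigns to each argumentation framework a set $\sigma(AF)$ of subsets of $AR$; "$\sigma$'s extensions are maximal conflict-free sets" means that for every $AF$, every $E\in\sigma(AF)$ is a $\subseteq$-maximal conflict-free subset of the argument set of $AF$. $AF\preceq_N AF'$ (normal expansion) iff $AR\subseteq AR'$, $Attacks\subseteq Attacks'$ and no $(a,b)\in Attacks'\setminus Attacks$ has both $a,b\in AR$. *)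

theory Defs
  imports Main
begin

definition is_AF :: "'a set \<Rightarrow> ('a \<times> 'a) set \<Rightarrow> bool" where
  "is_AF AR Att \<longleftrightarrow> finite AR \<and> Att \<subseteq> AR \<times> AR"

definition conflict_free :: "('a \<times> 'a) set \<Rightarrow> 'a set \<Rightarrow> bool" where
  "conflict_free Att S \<longleftrightarrow> (\<forall>a\<in>S. \<forall>b\<in>S. (a, b) \<notin> Att)"

definition maximal_conflict_free :: "'a set \<Rightarrow> ('a \<times> 'a) set \<Rightarrow> 'a set \<Rightarrow> bool" where
  "maximal_conflict_free AR Att S \<longleftrightarrow>
     S \<subseteq> AR \<and> conflict_free Att S \<and>
     (\<forall>T. S \<subseteq> T \<and> T \<subseteq> AR \<and> conflict_free Att T \<longrightarrow> T = S)"

definition normal_expansion ::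
  "'a set \<Rightarrow> ('a \<times> 'a) set \<Rightarrow> 'a set \<Rightarrow> ('a \<times> 'a) set \<Rightarrow> bool" where
  "normal_expansion AR Att AR' Att' \<longleftrightarrow>
     AR \<subseteq> AR' \<and> Att \<subseteq> Att' \<and>
     (\<forall>a b. (a, b) \<in> Att' - Att \<longrightarrow> \<not> (a \<in> AR \<and> b \<in> AR))"

end

theory Submission
  imports Defs
begin

text \<open>An extension E' of the expanded framework is conflict-free for the larger attack
  relation, hence for Att. If E' \<subseteq> AR, it is thus a conflict-free superset of the
  maximal conflict-free set E, so E' = E.\<close>

lemma conflict_free_antimono:
  assumes "Att \<subseteq> Att'" and "conflict_free Att' S"
  shows "conflict_free Att S"
  using assms unfolding conflict_free_def by blast

lemma maximal_conflict_freeD: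
  assumes "maximal_conflict_free AR Att E"
    and "E \<subseteq> T" and "T \<subseteq> AR" and "conflict_free Att T"
  shows "T = E"
  using assms unfolding maximal_conflict_free_def by blast

theorem proposition52:
  fixes \<sigma> :: "'a set \<Rightarrow> ('a \<times> 'a) set \<Rightarrow> 'a set set"
    and AR AR' :: "'a set" and Att Att' :: "('a \<times> 'a) set"
  assumes sem: "\<And>X R. is_AF X R \<Longrightarrow> \<forall>E \<in> \<sigma> X R. maximal_conflict_free X R E"
    and AF: "is_AF AR Att" and AF': "is_AF AR' Att'"
    and exp: "normal_expansion AR Att AR' Att'"
    and incl: "\<forall>E \<in> \<sigma> AR Att. \<forall>E' \<in> \<sigma> AR' Att'. E \<subseteq> E'"
  shows "\<forall>E \<in> \<sigma> AR Att. \<forall>E' \<in> \<sigma> AR' Att'. \<not> E' \<subseteq> AR \<or> E' = E"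
proof (intro ballI)
  fix E E'
  assume E: "E \<in> \<sigma> AR Att" and E': "E' \<in> \<sigma> AR' Att'"
  have max: "maximal_conflict_free AR Att E" using sem[OF AF] E by blast
  have "Att \<subseteq> Att'" using exp unfolding normal_expansion_def by blast
  moreover have "conflict_free Att' E'"
    using sem[OF AF'] E' unfolding maximal_conflict_free_def by blast
  ultimately have cf: "conflict_free Att E'" by (rule conflict_free_antimono)
  have "E \<subseteq> E'" using incl E E' by blast
  then have "E' \<subseteq> AR \<Longrightarrow> E' = E" using maximal_conflict_freeD[OF max] cf by blast
  then show "\<not> E' \<subseteq> AR \<or> E' = E" by blast
qed

end
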